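(* Let $\mathcal{N}$ be a finite set of players (cognitive/CPC nodes) and let $\mathcal{K}$ be a finite set of primary users. For every coalition $S\subseteq\mathcal{N}$, every $i\in S$ and every $k\in\mathcal{K}$, let $u_{ik}(S)\in\mathbb{R}$ be a number depending only on $i$, $k$ and the set $S$. Fix $0<\kappa\le 1$ and define the payoff $$\phi_i(S)=\sum_{k\in\mathcal{K}}u_{ik}(S)-c(S),\qquad c(S)=\begin{cases}\kappa(|S|-1),& |S|>1,\\ 0,&\text{otherwise},\end{cases}$$ with $\phi(\emptyset)=0$, the coalition value $v(S)=\sum_{j\in S}\phi_j(S)$ (so $v(\emptyset)=0$), and for $i\in S$ $$q_i(S)=\begin{cases}\phi_i(S),&\text{if }\phi_j(S)\ge\phi_j(S\setminus\{i\})\text{ for all }j\in S\setminus\{i\},\\ -\infty,&\text{otherwise.}\end{cases}$$ For coalitions $S_1,S_2$ both containing $i$, write $S_1\succ_i S_2$ iff $q_i(S_1)>q_i(S_2)$ and $v(S_1)+v(S_2\setminus\{i\})>v(S_1\setminus\{i\})+v(S_2)$. Given a partition $\Pi$ of $\mathcal{N}$, a join operation consists of a player $i$ in its coalition $S_m\in\Pi$ and a set $S_k\in\Pi\cup\{\emptyset\}$, $S_k\neq S_m$, with $S_k\cup\{i\}\succ_i S_m$; it replaces $\Pi$ by $\Pi'=(\Pi\setminus\{S_m,S_k\})\cup\{S_m\setminus\{i\},S_k\cup\{i\}\}$ (discarding empty sets). Then, starting from any initial partition $\Pi_{\mathrm{init}}$ of $\mathcal{N}$, every sequence of partitions $\Pi_0=\Pi_{\mathrm{init}}\to\Pi_1\to\Pi_2\to\cdots$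 in which each $\Pi_{l}$ is obtained from $\Pi_{l-1}$ by a join operation is finite; i.e., the sequential join-operation process always converges to a final partition $\Pi_{\mathrm{final}}$ of $\mathcal{N}$ into disjoint coalitions, irrespective of $\Pi_{\mathrm{init}}$.
   Context: In the paper, $u_{ik}(S)$ is the negative Kullback–Leibler distance between two cooperative (Dirichlet-process-based) estimates, computed by node $i$ within coalition $S$, of the distribution of primary user $k$'s activity; the only property used in the statement is that it is a real number determined by $i$, $k$ and $S$ (the game is hedonic: payoffs depend only on the members of one's own coalition). Join operations are performed one at a time in an arbitrary sequential order. *)

theory Defs
  imports Main "HOL-Library.Disjoint_Sets" "HOL-Library.Extended_Real"
begin

definition cost :: "real \<Rightarrow> 'a set \<Rightarrow> real" where
  "cost \<kappa> S = (if card S > 1 then \<kappa> * (real (card S) - 1) else 0)"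

definition phi :: "'k set \<Rightarrow> ('a \<Rightarrow> 'k \<Rightarrow> 'a set \<Rightarrow> real) \<Rightarrow> real \<Rightarrow> 'a \<Rightarrow> 'a set \<Rightarrow> real" where
  "phi K u \<kappa> i S = (if S = {} then 0 else (\<Sum>k\<in>K. u i k S) - cost \<kappa> S)"

definition val :: "'k set \<Rightarrow> ('a \<Rightarrow> 'k \<Rightarrow> 'a set \<Rightarrow> real) \<Rightarrow> real \<Rightarrow> 'a set \<Rightarrow> real" where
  "val K u \<kappa> S = (\<Sum>j\<in>S. phi K u \<kappa> j S)"

definition qpay :: "'k set \<Rightarrow> ('a \<Rightarrow> 'k \<Rightarrow> 'a set \<Rightarrow> real) \<Rightarrow> real \<Rightarrow> 'a \<Rightarrow> 'a set \<Rightarrow> ereal" where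
  "qpay K u \<kappa> i S =
     (if (\<forall>j\<in>S - {i}. phi K u \<kappa> j S \<ge> phi K u \<kappa> j (S - {i}))
      then ereal (phi K u \<kappa> i S) else -\<infinity>)"

definition prefers :: "'k set \<Rightarrow> ('a \<Rightarrow> 'k \<Rightarrow> 'a set \<Rightarrow> real) \<Rightarrow> real \<Rightarrow> 'a \<Rightarrow> 'a set \<Rightarrow> 'a set \<Rightarrow> bool" where
  "prefers K u \<kappa> i S1 S2 \<longleftrightarrow>
     qpay K u \<kappa> i S1 > qpay K u \<kappa> i S2 \<and>
     val K u \<kappa> S1 + val K u \<kappa> (S2 - {i}) > val K u \<kappa> (S1 - {i}) + val K u \<kappa> S2"

definition join_op :: "'k set \<Rightarrow> ('a \<Rightarrow> 'k \<Rightarrow> 'a set \<Rightarrow> real) \<Rightarrow> real \<Rightarrow> 'a set set \<Rightarrow> 'a set set \<Rightarrow> bool" where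
  "join_op K u \<kappa> P P' \<longleftrightarrow>
     (\<exists>i Sm Sk. Sm \<in> P \<and> i \<in> Sm \<and> Sk \<in> P \<union> {{}} \<and> Sk \<noteq> Sm \<and>
        prefers K u \<kappa> i (insert i Sk) Sm \<and>
        P' = ((P - {Sm, Sk}) \<union> {Sm - {i}, insert i Sk}) - {{}})"

end

theory Submission
  imports Defs
begin

text \<open>The total value of a partition, the sum of \<open>v(S)\<close> over its coalitions, is a potential:
  the second half of \<open>S\<^sub>k \<union> {i} \<succ>\<^sub>i S\<^sub>m\<close> says precisely that the two coalitions changed by a join
  operation gain value together, while the other coalitions are untouched and empty coalitions
  contribute \<open>v(\<emptyset>) = 0\<close>. Join operations map partitions of \<open>\<N>\<close> to partitions of \<open>\<N>\<close>, of which
  there are only finitely many, so the potential cannot increase forever. The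
  argument uses nothing about \<open>u\<close>, \<open>\<kappa>\<close> or \<open>\<K>\<close>.\<close>

text \<open>Player \<open>i\<close> leaves \<open>Sm\<close> and joins \<open>Sk\<close>; \<open>Sk = {}\<close> means that \<open>i\<close> becomes a singleton.\<close>

definition move :: "'a \<Rightarrow> 'a set \<Rightarrow> 'a set \<Rightarrow> 'a set set \<Rightarrow> 'a set set" where
  "move i Sm Sk P = P - {Sm, Sk} \<union> {Sm - {i}, insert i Sk} - {{}}"

lemma partition_on_move:
  assumes P: "partition_on N P" and Sm: "Sm \<in> P" and i: "i \<in> Sm" and Sk: "Sk \<in> insert {} P"
    and "Sk \<noteq> Sm"
  shows "partition_on N (move i Sm Sk P)"
proof (rule partition_onI)
  have disj: "disjnt X Y" if "X \<in> insert {} P" "Y \<in> insert {} P" "X \<noteq> Y" for X Y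
    using P that unfolding partition_on_def disjoint_def disjnt_def by blast
  have i_notin: "i \<notin> Y" if "Y \<in> insert {} P" "Y \<noteq> Sm" for Y
    using disj[of Y Sm] that Sm i by (auto simp: disjnt_def)
  have block_cases: "(\<exists>Y \<in> insert {} P - {Sk}. X = Y - {i}) \<or> X = insert i Sk"
    if X: "X \<in> move i Sm Sk P" for X
  proof -
    consider "X \<in> P - {Sm, Sk}" | "X = Sm - {i}" | "X = insert i Sk"
      using X unfolding move_def by blast
    then show ?thesis
    proof cases
      case 1
      then have "X = X - {i}" using i_notin[of X] by auto
      with 1 show ?thesis by blast
    qed (use Sm \<open>Sk \<noteq> Sm\<close> in blast)+
  qed
  show "\<Union>(move i Sm Sk P) = N"
    using partition_onD1[OF P] Sm Sk i unfolding move_def by auto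
  show "{} \<notin> move i Sm Sk P" unfolding move_def by blast
  have disjnt_minus: "disjnt (X - {i}) (Y - {i})" "disjnt (X - {i}) (insert i Y)"
    if "disjnt X Y" for X Y
    using that by (auto simp: disjnt_def)
  fix X Y assume X: "X \<in> move i Sm Sk P" and Y: "Y \<in> move i Sm Sk P" and "X \<noteq> Y"
  show "disjnt X Y"
    using block_cases[OF X] block_cases[OF Y]
  proof (elim disjE bexE)
    fix X' Y' assume "X' \<in> insert {} P - {Sk}" "X = X' - {i}" "Y' \<in> insert {} P - {Sk}" "Y = Y' - {i}"
    then show ?thesis using disjnt_minus(1)[OF disj[of X' Y']] \<open>X \<noteq> Y\<close> by blast
  next
    fix X' assume "X' \<in> insert {} P - {Sk}" "X = X' - {i}" "Y = insert i Sk"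
    then show ?thesis using disjnt_minus(2)[OF disj[of X' Sk]] Sk by blast
  next
    fix Y' assume "Y' \<in> insert {} P - {Sk}" "Y = Y' - {i}" "X = insert i Sk"
    then show ?thesis using disjnt_minus(2)[OF disj[of Y' Sk]] Sk disjnt_sym by blast
  qed (use \<open>X \<noteq> Y\<close> in blast)
qed

lemma sum_replace_pair:
  fixes f :: "'a \<Rightarrow> 'b::ab_group_add"
  assumes "finite P" "a \<in> P" "b \<in> insert z P" "a \<noteq> b" "c \<notin> P - {a, b}" "d \<notin> P - {a, b}"
    and "c \<noteq> d" "f z = 0"
  shows "sum f (P - {a, b} \<union> {c, d} - {z}) = sum f P - f a - f b + f c + f d"
proof -
  have "sum f (P - {a, b} \<union> {c, d} - {z}) = sum f (insert c (insert d (P - {a, b})))"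
    using assms(1,8) by (simp add: sum_diff1)
  also have "\<dots> = sum f (P - {a, b}) + f c + f d"
    using assms(1,5-7) by (simp add: algebra_simps)
  also have "sum f (P - {a, b}) = sum f (P - {a} - {b})"
    by (metis Diff_insert2)
  also have "\<dots> = sum f P - f a - f b"
    using assms(1-4,8) by (auto simp: sum_diff1)
  finally show ?thesis .
qed

definition welfare :: "'k set \<Rightarrow> ('a \<Rightarrow> 'k \<Rightarrow> 'a set \<Rightarrow> real) \<Rightarrow> real \<Rightarrow> 'a set set \<Rightarrow> real" where
  "welfare K u \<kappa> P = (\<Sum>S\<in>P. val K u \<kappa> S)"

lemma welfare_move:
  assumes P: "partition_on N P" and "finite N" and Sm: "Sm \<in> P" and i: "i \<in> Sm"
    and Sk: "Sk \<in> insert {} P" and "Sk \<noteq> Sm"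
  shows "welfare K u \<kappa> (move i Sm Sk P) =
    welfare K u \<kappa> P - val K u \<kappa> Sm - val K u \<kappa> Sk + val K u \<kappa> (Sm - {i}) + val K u \<kappa> (insert i Sk)"
proof -
  have disj: "X \<inter> Y = {}" if "X \<in> P" "Y \<in> P" "X \<noteq> Y" for X Y
    using P that unfolding partition_on_def disjoint_def by blast
  have fresh_Sm: "Sm - {i} \<notin> P - {Sm, Sk}"
  proof
    assume rest: "Sm - {i} \<in> P - {Sm, Sk}"
    then have "(Sm - {i}) \<inter> Sm = {}"
      using disj Sm by blast
    then have "Sm - {i} = {}"
      by blast
    with rest partition_onD3[OF P] show False
      by simp
  qed
  have fresh_Sk: "insert i Sk \<notin> P - {Sm, Sk}"
    using disj[OF _ Sm] i by blast
  have "Sm - {i} \<noteq> insert i Sk"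
    by blast
  moreover have "val K u \<kappa> {} = 0"
    by (simp add: val_def)
  ultimately show ?thesis
    unfolding welfare_def move_def
    using sum_replace_pair[OF finite_elements[OF \<open>finite N\<close> P] Sm Sk \<open>Sk \<noteq> Sm\<close>[symmetric] fresh_Sm fresh_Sk]
    by blast
qed

lemma join_op_iff_move:
  "join_op K u \<kappa> P P' \<longleftrightarrow>
     (\<exists>i Sm Sk. Sm \<in> P \<and> i \<in> Sm \<and> Sk \<in> insert {} P \<and> Sk \<noteq> Sm \<and>
        prefers K u \<kappa> i (insert i Sk) Sm \<and> P' = move i Sm Sk P)"
  unfolding join_op_def move_def Un_insert_right Un_empty_right ..

lemma join_op_partition_on:
  assumes "partition_on N P" and "join_op K u \<kappa> P P'"
  shows "partition_on N P'"
  using assms(2) unfolding join_op_iff_move by (auto intro: partition_on_move[OF assms(1)])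

lemma join_op_welfare_less:
  assumes P: "partition_on N P" and "finite N" and "join_op K u \<kappa> P P'"
  shows "welfare K u \<kappa> P < welfare K u \<kappa> P'"
proof -
  obtain i Sm Sk where Sm: "Sm \<in> P" and i: "i \<in> Sm" and Sk: "Sk \<in> insert {} P"
    and "Sk \<noteq> Sm" and pref: "prefers K u \<kappa> i (insert i Sk) Sm" and P': "P' = move i Sm Sk P"
    using assms(3) unfolding join_op_iff_move by auto
  have "i \<notin> Sk"
    using partition_onD2[OF P] Sm Sk i \<open>Sk \<noteq> Sm\<close> unfolding disjoint_def by blast
  then have "val K u \<kappa> Sm + val K u \<kappa> Sk < val K u \<kappa> (Sm - {i}) + val K u \<kappa> (insert i Sk)"
    using pref unfolding prefers_def by simp
  then show ?thesis
    unfolding P' welfare_move[OF P \<open>finite N\<close> Sm i Sk \<open>Sk \<noteq> Sm\<close>] by simp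
qed

lemma finite_range_not_increasing:
  fixes g :: "'a \<Rightarrow> 'b::linorder"
  assumes "finite (range f)"
  shows "\<not> (\<forall>l. g (f l) < g (f (Suc l)))"
proof
  assume "\<forall>l. g (f l) < g (f (Suc l))"
  then have "strict_mono (g \<circ> f)"
    by (simp add: strict_mono_Suc_iff)
  then have "inj f"
    using strict_mono_imp_inj_on inj_on_imageI2 by blast
  with assms show False
    using finite_imageD infinite_UNIV_nat by blast
qed

theorem theorem1:
  fixes N :: "'a set" and K :: "'k set" and u :: "'a \<Rightarrow> 'k \<Rightarrow> 'a set \<Rightarrow> real"
    and \<kappa> :: real and Pinit :: "'a set set"
  assumes "finite N" and "finite K" and "0 < \<kappa>" and "\<kappa> \<le> 1"
    and "partition_on N Pinit"
  shows "(\<forall>P. (join_op K u \<kappa>)\<^sup>*\<^sup>* Pinit P \<longrightarrow> partition_on N P) \<and>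
         \<not> (\<exists>f :: nat \<Rightarrow> 'a set set. f 0 = Pinit \<and> (\<forall>l. join_op K u \<kappa> (f l) (f (Suc l))))"
proof
  have "partition_on N P" if "(join_op K u \<kappa>)\<^sup>*\<^sup>* Pinit P" for P
    using that by induction (use assms(5) join_op_partition_on in blast)+
  then show "\<forall>P. (join_op K u \<kappa>)\<^sup>*\<^sup>* Pinit P \<longrightarrow> partition_on N P"
    by blast
  show "\<not> (\<exists>f. f 0 = Pinit \<and> (\<forall>l. join_op K u \<kappa> (f l) (f (Suc l))))"
  proof
    assume "\<exists>f. f 0 = Pinit \<and> (\<forall>l. join_op K u \<kappa> (f l) (f (Suc l)))"
    then obtain f where f0: "f 0 = Pinit" and steps: "\<And>l. join_op K u \<kappa> (f l) (f (Suc l))"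
      by blast
    have part: "partition_on N (f l)" for l
      by (induction l) (use f0 assms(5) join_op_partition_on[OF _ steps] in auto)
    then have "finite (range f)"
      by (blast intro: finite_subset[OF _ finitely_many_partition_on[OF assms(1)]])
    moreover have "\<forall>l. welfare K u \<kappa> (f l) < welfare K u \<kappa> (f (Suc l))"
      using join_op_welfare_less[OF part assms(1) steps] by blast
    ultimately show False
      using finite_range_not_increasing by metis
  qed
qed

end
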